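(* The labelling of the pointed partition posets ($\operatorname{Perm}$-partition posets) on $n$ elements, which labels the edge between $(A_1,\dots,A_p)$ and the pointed partition obtained by merging $A_i$ and $A_j$ by $(\max(\min A_i,\min A_j),\,a+n-p)$, where $a\in\{\min A_i,\min A_j\}$ is the minimal element of the part whose pointed element is not chosen as pointed element of $A_i\cup A_j$ (labels ordered lexicographically), is compatible with isomorphisms of subposets.
   Context: A pointed partition of $\{1,\dots,n\}$ is a set partition with one distinguished element in each part; they are ordered by refinement, where $A\le B$ requires moreover that each element pointed in $B$ is pointed in $A$. These are the partition posets of the basic-set operad $\operatorname{Perm}$, whose elements in arity $n$ are $e_{n,k}$, $1\le k\le n$, with $\gamma(e_{p,a};e_{k_1,b_1},\dots,e_{k_p,b_p})=e_{k_1+\dots+k_p,\,k_1+\dots+k_{a-1}+b_a}$. For a covering $\lambda\prec\omega$ merging parts $A_i,A_j$, $D_\lambda^\omega=\{\min A_i,\min A_j\}$ and $\delta_\lambda^\omega$ is the element of $\operatorname{Perm}$ on these two points recording which one carries the chosen pointed element; for general $\lambda\le\omega$, $D_\lambda^\omega$ is the set of minima of the parts of $\lambda$ contained in non-trivially merged parts of $\omega$, and $\delta^\omega_\lambda$ is the induced pointed partition of $D_\lambda^\omega$. Two interval subposets $\Pi_1,\Pi_2$ with $E_i=\bigcup_{\lambda\le\omega\in\Pi_i}D_\lambda^\omega$ are isomorphic if there is a poset isomorphism $g$ and an increasing bijection $f:E_1\to E_2$ with $\delta_{g(\lambda)}^{g(\omega)}=f(\delta_\lambda^\omega)$ for every covering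 $\lambda\prec\omega$. A family of labellings is compatible with isomorphisms of subposets if every such isomorphism induces a map on labels sending increasing chains to increasing chains, non-increasing chains to non-increasing chains, and preserving the lexicographic preorder on chains. *)

theory Defs
  imports Main
begin

text \<open>A pointed partition of {1..n} is represented as a set of pairs (block, pointed element).\<close>

definition pointed_partition :: "nat \<Rightarrow> (nat set \<times> nat) set \<Rightarrow> bool" where
  "pointed_partition n P \<longleftrightarrow>
     (\<forall>(S,a)\<in>P. a \<in> S) \<and>
     (\<forall>x\<in>P. \<forall>y\<in>P. x \<noteq> y \<longrightarrow> fst x \<inter> fst y = {}) \<and>
     \<Union> (fst ` P) = {1..n}"

definition PP :: "nat \<Rightarrow> (nat set \<times> nat) set set" where
  "PP n = {P. pointed_partition n P}"

definition pp_le :: "(nat set \<times> nat) set \<Rightarrow> (nat set \<times> nat) set \<Rightarrow> bool" where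
  "pp_le P Q \<longleftrightarrow> (\<forall>x\<in>P. \<exists>y\<in>Q. fst x \<subseteq> fst y) \<and> snd ` Q \<subseteq> snd ` P"

definition pp_covers :: "nat \<Rightarrow> (nat set \<times> nat) set \<Rightarrow> (nat set \<times> nat) set \<Rightarrow> bool" where
  "pp_covers n P Q \<longleftrightarrow> P \<in> PP n \<and> Q \<in> PP n \<and> pp_le P Q \<and> P \<noteq> Q \<and>
     \<not> (\<exists>R\<in>PP n. pp_le P R \<and> pp_le R Q \<and> R \<noteq> P \<and> R \<noteq> Q)"

definition pp_interval :: "nat \<Rightarrow> (nat set \<times> nat) set \<Rightarrow> (nat set \<times> nat) set \<Rightarrow> (nat set \<times> nat) set set" where
  "pp_interval n x y = {z \<in> PP n. pp_le x z \<and> pp_le z y}"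

definition Dset :: "(nat set \<times> nat) set \<Rightarrow> (nat set \<times> nat) set \<Rightarrow> nat set" where
  "Dset P Q = {Min S | S a. (S,a) \<in> P \<and>
      (\<exists>(T,b)\<in>Q. S \<subseteq> T \<and> (\<exists>(S',a')\<in>P. S' \<noteq> S \<and> S' \<subseteq> T))}"

definition delta :: "(nat set \<times> nat) set \<Rightarrow> (nat set \<times> nat) set \<Rightarrow> (nat set \<times> nat) set" where
  "delta P Q = {({Min S | S a. (S,a) \<in> P \<and> S \<subseteq> T}, Min (THE S. (S,b) \<in> P)) | T b.
      (T,b) \<in> Q \<and> (\<exists>(S,a)\<in>P. \<exists>(S',a')\<in>P. S \<noteq> S' \<and> S \<subseteq> T \<and> S' \<subseteq> T)}"

definition pp_image :: "(nat \<Rightarrow> nat) \<Rightarrow> (nat set \<times> nat) set \<Rightarrow> (nat set \<times> nat) set" where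
  "pp_image f P = (\<lambda>(S,a). (f ` S, f a)) ` P"

definition Eset :: "(nat set \<times> nat) set set \<Rightarrow> nat set" where
  "Eset Pi = \<Union> {Dset u v | u v. u \<in> Pi \<and> v \<in> Pi \<and> pp_le u v}"

definition subposet_iso ::
  "nat \<Rightarrow> (nat set \<times> nat) set set \<Rightarrow> nat \<Rightarrow> (nat set \<times> nat) set set \<Rightarrow>
   ((nat set \<times> nat) set \<Rightarrow> (nat set \<times> nat) set) \<Rightarrow> (nat \<Rightarrow> nat) \<Rightarrow> bool" where
  "subposet_iso n1 Pi1 n2 Pi2 g f \<longleftrightarrow>
     bij_betw g Pi1 Pi2 \<and>
     (\<forall>u\<in>Pi1. \<forall>v\<in>Pi1. pp_le u v \<longleftrightarrow> pp_le (g u) (g v)) \<and>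
     bij_betw f (Eset Pi1) (Eset Pi2) \<and> strict_mono_on (Eset Pi1) f \<and>
     (\<forall>u\<in>Pi1. \<forall>v\<in>Pi1. pp_covers n1 u v \<longrightarrow> delta (g u) (g v) = pp_image f (delta u v))"

definition pp_label :: "nat \<Rightarrow> (nat set \<times> nat) set \<Rightarrow> (nat set \<times> nat) set \<Rightarrow> nat \<times> nat" where
  "pp_label n P Q = (THE l. \<exists>S a T b c. (S,a) \<in> P \<and> (T,b) \<in> P \<and> S \<noteq> T \<and>
      c \<in> {a, b} \<and> Q = insert (S \<union> T, c) (P - {(S,a), (T,b)}) \<and>
      l = (max (Min S) (Min T), (if c = a then Min T else Min S) + n - card P))"

definition lab_less :: "nat \<times> nat \<Rightarrow> nat \<times> nat \<Rightarrow> bool" where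
  "lab_less l l' \<longleftrightarrow> fst l < fst l' \<or> (fst l = fst l' \<and> snd l < snd l')"

definition sat_chain :: "nat \<Rightarrow> (nat set \<times> nat) set set \<Rightarrow> (nat set \<times> nat) set list \<Rightarrow> bool" where
  "sat_chain n Pi cs \<longleftrightarrow> cs \<noteq> [] \<and> set cs \<subseteq> Pi \<and>
     (\<forall>i. Suc i < length cs \<longrightarrow> pp_covers n (cs ! i) (cs ! Suc i))"

definition chain_labels :: "nat \<Rightarrow> (nat set \<times> nat) set list \<Rightarrow> (nat \<times> nat) list" where
  "chain_labels n cs = map (\<lambda>i. pp_label n (cs ! i) (cs ! Suc i)) [0..<length cs - 1]"

definition increasing_chain :: "nat \<Rightarrow> (nat set \<times> nat) set list \<Rightarrow> bool" where
  "increasing_chain n cs \<longleftrightarrow> sorted_wrt lab_less (chain_labels n cs)"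

definition chain_lex_le :: "nat \<Rightarrow> (nat set \<times> nat) set list \<Rightarrow> (nat set \<times> nat) set list \<Rightarrow> bool" where
  "chain_lex_le n cs cs' \<longleftrightarrow>
     (let ls = chain_labels n cs; ls' = chain_labels n cs' in
      ls = ls' \<or> (\<exists>i < length ls. i < length ls' \<and> take i ls = take i ls' \<and> lab_less (ls ! i) (ls' ! i)))"

end

theory Submission
  imports Defs
begin

(* A covering u < v of pointed partitions merges two blocks S and T of u, the merged block keeping
   the point a of S.  Then delta u v = {({min S, min T}, min S)}, so the label
   (max (min S) (min T), min T + n - |u|) is determined by delta u v and the rank |u|.
   An isomorphism of interval subposets preserves coverings and transports delta along the
   increasing map f, and along a saturated chain the rank drops by one at each step.  Hence the
   i-th labels of a chain and of its image are (max m m', m' + c + i) and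
   (max (f m) (f m'), f m' + d + i), where c and d depend only on the bottom of the chain.
   Comparisons of such labels at consecutive positions of one chain, or at the same position of
   two chains with a common bottom, are preserved by f. *)

section \<open>Pointed partitions\<close>

lemma PP_D:
  assumes "P \<in> PP n"
  shows PP_point_in_block: "(S, a) \<in> P \<Longrightarrow> a \<in> S"
    and PP_disjoint: "x \<in> P \<Longrightarrow> y \<in> P \<Longrightarrow> x \<noteq> y \<Longrightarrow> fst x \<inter> fst y = {}"
    and PP_Union: "\<Union> (fst ` P) = {1..n}"
  using assms unfolding PP_def pointed_partition_def by auto

lemma PP_block_eq:
  assumes "P \<in> PP n" "(S, a) \<in> P" "(S', a') \<in> P" "x \<in> S" "x \<in> S'"
  shows "S = S' \<and> a = a'"
  using PP_disjoint[OF assms(1-3)] assms(4,5) by auto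

lemma PP_point_inj:
  assumes "P \<in> PP n" "(S, a) \<in> P" "(S', a) \<in> P"
  shows "S = S'"
  using PP_block_eq[OF assms] PP_point_in_block[OF assms(1)] assms by blast

lemma PP_block:
  assumes "P \<in> PP n" "(S, a) \<in> P"
  shows PP_block_subset: "S \<subseteq> {1..n}" and PP_block_finite: "finite S"
    and PP_block_nonempty: "S \<noteq> {}"
proof -
  show "S \<subseteq> {1..n}" using PP_Union[OF assms(1)] assms(2) by force
  then show "finite S" using finite_subset by blast
  show "S \<noteq> {}" using PP_point_in_block[OF assms] by blast
qed

lemma PP_finite_card:
  assumes "P \<in> PP n"
  shows PP_finite: "finite P" and card_PP_le: "card P \<le> n"
proof -
  have inj: "inj_on snd P"
    by (rule inj_onI) (metis assms PP_point_inj prod.collapse)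
  have points: "snd ` P \<subseteq> {1..n}"
    using PP_block_subset[OF assms] PP_point_in_block[OF assms] by force
  then show "finite P" using inj finite_imageD finite_subset by blast
  have "card P = card (snd ` P)" using card_image[OF inj] by simp
  also have "\<dots> \<le> n" using card_mono[OF _ points] by simp
  finally show "card P \<le> n" .
qed

lemma pp_le_trans: "pp_le P Q \<Longrightarrow> pp_le Q R \<Longrightarrow> pp_le P R"
  unfolding pp_le_def by (meson dual_order.trans subset_trans)

lemma pp_le_point:
  assumes "pp_le u v" "(T, b) \<in> v"
  obtains S where "(S, b) \<in> u"
proof -
  have "b \<in> snd ` u" using assms unfolding pp_le_def by force
  then show thesis using that by force
qed

lemma pp_le_block:
  assumes "pp_le u v" "(X, c) \<in> u"
  obtains T b where "(T, b) \<in> v" "X \<subseteq> T"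
proof -
  obtain y where "y \<in> v" "X \<subseteq> fst y" using assms unfolding pp_le_def by fastforce
  then show thesis using that by (cases y) simp
qed

lemma PP_block_containing:
  assumes "P \<in> PP n" "x \<in> {1..n}"
  obtains S a where "(S, a) \<in> P" "x \<in> S"
proof -
  obtain y where "y \<in> P" "x \<in> fst y" using PP_Union[OF assms(1)] assms(2) by blast
  then show thesis using that by (cases y) simp
qed

lemma pp_le_block_subset:
  assumes v: "v \<in> PP n" and le: "pp_le u v" and X: "(X, c) \<in> u" and T: "(T, b) \<in> v"
    and "x \<in> X" "x \<in> T"
  shows "X \<subseteq> T"
proof -
  obtain T' b' where T': "(T', b') \<in> v" "X \<subseteq> T'" using pp_le_block[OF le X] .
  then show ?thesis using PP_block_eq[OF v T'(1) T, of x] assms(5,6) by blast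
qed

section \<open>Coverings merge two blocks\<close>

definition pp_merge ::
  "(nat set \<times> nat) set \<Rightarrow> nat set \<Rightarrow> nat \<Rightarrow> nat set \<Rightarrow> nat \<Rightarrow> (nat set \<times> nat) set" where
  "pp_merge P S a T b = insert (S \<union> T, a) (P - {(S, a), (T, b)})"

context
  fixes n u S a T b
  assumes u: "u \<in> PP n" and S: "(S, a) \<in> u" and T: "(T, b) \<in> u" and ST: "S \<noteq> T"
begin

lemma merged_blocks_disjoint: "S \<inter> T = {}"
  using PP_disjoint[OF u S T] ST by simp

lemma unmerged_block_disjoint:
  "x \<in> u - {(S, a), (T, b)} \<Longrightarrow> fst x \<inter> (S \<union> T) = {}"
  using PP_disjoint[OF u _ S] PP_disjoint[OF u _ T] by fastforce

lemma pp_merge_disjoint: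
  assumes "x \<in> pp_merge u S a T b" "y \<in> pp_merge u S a T b" "x \<noteq> y"
  shows "fst x \<inter> fst y = {}"
proof -
  have disj: "fst x \<inter> fst y = {}"
    if x: "x \<in> u - {(S, a), (T, b)}" and y: "y \<in> pp_merge u S a T b" and "x \<noteq> y" for x y
  proof (cases "y = (S \<union> T, a)")
    case True
    then show ?thesis using unmerged_block_disjoint[OF x] by simp
  next
    case False
    then have "y \<in> u" using y unfolding pp_merge_def by simp
    then show ?thesis using PP_disjoint[OF u] x \<open>x \<noteq> y\<close> by blast
  qed
  have "x \<in> u - {(S, a), (T, b)} \<or> y \<in> u - {(S, a), (T, b)}"
    using assms unfolding pp_merge_def by blast
  then show ?thesis using disj[of x y] disj[of y x] assms by blast
qed

lemma Union_pp_merge: "\<Union> (fst ` pp_merge u S a T b) = \<Union> (fst ` u)"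
proof
  have "S \<union> T \<subseteq> \<Union> (fst ` u)" using S T by force
  then show "\<Union> (fst ` pp_merge u S a T b) \<subseteq> \<Union> (fst ` u)"
    unfolding pp_merge_def by auto
  show "\<Union> (fst ` u) \<subseteq> \<Union> (fst ` pp_merge u S a T b)"
  proof
    fix x assume "x \<in> \<Union> (fst ` u)"
    then obtain X c where "(X, c) \<in> u" "x \<in> X" by auto
    then show "x \<in> \<Union> (fst ` pp_merge u S a T b)"
      unfolding pp_merge_def by (cases "(X, c) \<in> {(S, a), (T, b)}") force+
  qed
qed

lemma pp_merge_PP: "pp_merge u S a T b \<in> PP n"
proof -
  have "\<forall>(X, c) \<in> pp_merge u S a T b. c \<in> X"
  proof
    fix x assume "x \<in> pp_merge u S a T b"
    then consider "x = (S \<union> T, a)" | "x \<in> u" unfolding pp_merge_def by blast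
    then show "case x of (X, c) \<Rightarrow> c \<in> X"
      by cases (use PP_point_in_block[OF u S] PP_point_in_block[OF u] in auto)
  qed
  then show ?thesis
    using pp_merge_disjoint Union_pp_merge PP_Union[OF u]
    unfolding PP_def pointed_partition_def by simp
qed

lemma pp_le_merge: "pp_le u (pp_merge u S a T b)"
  using S unfolding pp_le_def pp_merge_def by force

lemma pp_merge_diff:
  shows "u - pp_merge u S a T b = {(S, a), (T, b)}"
    and "pp_merge u S a T b - u = {(S \<union> T, a)}"
proof -
  have "(S \<union> T, a) \<notin> u"
  proof
    assume "(S \<union> T, a) \<in> u"
    then have "S \<union> T = S" using PP_point_inj[OF u _ S] by blast
    then show False using merged_blocks_disjoint PP_block_nonempty[OF u T] by blast
  qed
  then show "u - pp_merge u S a T b = {(S, a), (T, b)}" "pp_merge u S a T b - u = {(S \<union> T, a)}"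
    using S T unfolding pp_merge_def by auto
qed

lemma card_pp_merge: "card u = Suc (card (pp_merge u S a T b))"
proof -
  have fin: "finite u" by (rule PP_finite[OF u])
  have "(S \<union> T, a) \<notin> u - {(S, a), (T, b)}" using pp_merge_diff(2) by blast
  then have "card (pp_merge u S a T b) = Suc (card (u - {(S, a), (T, b)}))"
    using fin unfolding pp_merge_def by simp
  moreover have "card (u - {(S, a), (T, b)}) = card u - 2" using S T ST fin by (simp add: card_Diff_subset)
  moreover have "2 \<le> card u" using card_mono[OF fin, of "{(S, a), (T, b)}"] S T ST by simp
  ultimately show ?thesis by simp
qed

end

lemma pp_merge_inject:
  assumes u: "u \<in> PP n" and S: "(S, a) \<in> u" and T: "(T, b) \<in> u" and ST: "S \<noteq> T"
    and S': "(S', a') \<in> u" and T': "(T', b') \<in> u" and "S' \<noteq> T'"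
    and eq: "pp_merge u S' a' T' b' = pp_merge u S a T b"
  shows "S' = S \<and> a' = a \<and> T' = T \<and> b' = b"
proof -
  have "{(S', a'), (T', b')} = {(S, a), (T, b)}" "{(S' \<union> T', a')} = {(S \<union> T, a)}"
    using pp_merge_diff[OF u S T ST] pp_merge_diff[OF u S' T' \<open>S' \<noteq> T'\<close>] eq by metis+
  moreover have "a \<noteq> b" using PP_point_inj[OF u S] T ST by blast
  ultimately show ?thesis by (auto simp: doubleton_eq_iff)
qed

lemma pp_le_block_eq_pointed:
  assumes u: "u \<in> PP n" and v: "v \<in> PP n" and le: "pp_le u v"
    and X: "(X, c) \<in> u" and T: "(T, b) \<in> v" and "X \<subseteq> T"
    and pointed: "\<And>Y d. (Y, d) \<in> u \<Longrightarrow> Y \<subseteq> T \<Longrightarrow> b \<in> Y"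
  shows "(X, c) = (T, b)"
proof -
  have bX: "b \<in> X" using pointed[OF X \<open>X \<subseteq> T\<close>] .
  have "T \<subseteq> X"
  proof
    fix x assume "x \<in> T"
    moreover obtain Y d where Y: "(Y, d) \<in> u" "x \<in> Y"
      using PP_block_containing[OF u] PP_block_subset[OF v T] \<open>x \<in> T\<close> by blast
    ultimately have "b \<in> Y" using pointed[OF Y(1)] pp_le_block_subset[OF v le Y(1) T] by blast
    then show "x \<in> X" using PP_block_eq[OF u Y(1) X _ bX] Y(2) by blast
  qed
  moreover obtain S0 where S0: "(S0, b) \<in> u" using pp_le_point[OF le T] .
  then have "c = b" using PP_block_eq[OF u X S0 bX PP_point_in_block[OF u S0]] by blast
  ultimately show ?thesis using \<open>X \<subseteq> T\<close> by simp
qed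

lemma pp_le_unpointed_block:
  assumes u: "u \<in> PP n" and v: "v \<in> PP n" and le: "pp_le u v" and "u \<noteq> v"
  obtains T b S c where "(T, b) \<in> v" "(S, c) \<in> u" "S \<subseteq> T" "b \<notin> S"
proof -
  have "\<exists>T b S c. (T, b) \<in> v \<and> (S, c) \<in> u \<and> S \<subseteq> T \<and> b \<notin> S"
  proof (rule ccontr)
    assume "\<not> ?thesis"
    then have pointed: "b \<in> S" if "(T, b) \<in> v" "(S, c) \<in> u" "S \<subseteq> T" for T b S c
      using that by blast
    have "u \<subseteq> v"
    proof
      fix x assume "x \<in> u"
      obtain X c where x: "x = (X, c)" by (cases x)
      with \<open>x \<in> u\<close> have X: "(X, c) \<in> u" by simp
      obtain T b where T: "(T, b) \<in> v" "X \<subseteq> T" using pp_le_block[OF le X] .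
      then show "x \<in> v" using pp_le_block_eq_pointed[OF u v le X T pointed[OF T(1)]] x by simp
    qed
    moreover have "v \<subseteq> u"
    proof
      fix y assume "y \<in> v"
      obtain T b where y: "y = (T, b)" by (cases y)
      with \<open>y \<in> v\<close> have T: "(T, b) \<in> v" by simp
      obtain S0 where S0: "(S0, b) \<in> u" using pp_le_point[OF le T] .
      then have "S0 = T" using PP_point_inj[OF v _ T] \<open>u \<subseteq> v\<close> by blast
      then show "y \<in> u" using S0 y by simp
    qed
    ultimately show False using \<open>u \<noteq> v\<close> by simp
  qed
  then show thesis using that by blast
qed

lemma pp_merge_le:
  assumes u: "u \<in> PP n" and v: "v \<in> PP n" and le: "pp_le u v"
    and S: "(S, a) \<in> u" and T: "(T, b) \<in> u" and "S \<noteq> T"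
    and U: "(U, a) \<in> v" and "S \<union> T \<subseteq> U"
  shows "pp_le (pp_merge u S a T b) v"
  unfolding pp_le_def
proof (intro conjI ballI subsetI)
  fix x assume "x \<in> pp_merge u S a T b"
  then consider "x = (S \<union> T, a)" | "x \<in> u" unfolding pp_merge_def by blast
  then show "\<exists>y\<in>v. fst x \<subseteq> fst y"
  proof cases
    case 1
    then show ?thesis using U \<open>S \<union> T \<subseteq> U\<close> by force
  next
    case 2
    then show ?thesis using le unfolding pp_le_def by blast
  qed
next
  fix c assume "c \<in> snd ` v"
  then obtain W where W: "(W, c) \<in> v" by force
  obtain X where X: "(X, c) \<in> u" using pp_le_point[OF le W] .
  have "(X, c) \<noteq> (T, b)"
  proof
    assume "(X, c) = (T, b)"
    then have "c \<in> U" using PP_point_in_block[OF u T] \<open>S \<union> T \<subseteq> U\<close> by auto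
    then have "c = a" using PP_block_eq[OF v W U PP_point_in_block[OF v W]] by blast
    then show False using PP_point_inj[OF u S] X \<open>(X, c) = (T, b)\<close> \<open>S \<noteq> T\<close> by auto
  qed
  then have "(X, c) \<in> pp_merge u S a T b \<or> c = a" using X unfolding pp_merge_def by auto
  then show "c \<in> snd ` pp_merge u S a T b" unfolding pp_merge_def by force
qed

lemma pp_covers_merge:
  assumes "pp_covers n u v"
  obtains S a T b where "(S, a) \<in> u" "(T, b) \<in> u" "S \<noteq> T" "v = pp_merge u S a T b"
proof -
  (* Merging the block of u pointed at b with a block of u inside T that misses b stays below v,
     so by the covering property it is v. *)
  have u: "u \<in> PP n" and v: "v \<in> PP n" and le: "pp_le u v" and "u \<noteq> v"
    and between: "\<And>R. R \<in> PP n \<Longrightarrow> pp_le u R \<Longrightarrow> pp_le R v \<Longrightarrow> R \<noteq> u \<Longrightarrow> R = v"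
    using assms unfolding pp_covers_def by blast+
  obtain T b S1 a1 where T: "(T, b) \<in> v" and S1: "(S1, a1) \<in> u" "S1 \<subseteq> T" "b \<notin> S1"
    using pp_le_unpointed_block[OF u v le \<open>u \<noteq> v\<close>] .
  obtain S0 where S0: "(S0, b) \<in> u" using pp_le_point[OF le T] .
  have "b \<in> S0" "b \<in> T" using PP_point_in_block[OF u S0] PP_point_in_block[OF v T] .
  then have "S0 \<subseteq> T" using pp_le_block_subset[OF v le S0 T] by blast
  have "S0 \<noteq> S1" using \<open>b \<in> S0\<close> S1(3) by blast
  let ?R = "pp_merge u S0 b S1 a1"
  have "?R \<noteq> u" using pp_merge_diff(2)[OF u S0 S1(1) \<open>S0 \<noteq> S1\<close>] by auto
  moreover have "pp_le ?R v"
    using pp_merge_le[OF u v le S0 S1(1) \<open>S0 \<noteq> S1\<close> T] \<open>S0 \<subseteq> T\<close> S1(2) by blast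
  ultimately have "?R = v"
    using between pp_merge_PP[OF u S0 S1(1) \<open>S0 \<noteq> S1\<close>] pp_le_merge[OF u S0 S1(1) \<open>S0 \<noteq> S1\<close>]
    by blast
  then show thesis using that S0 S1(1) \<open>S0 \<noteq> S1\<close> by blast
qed

lemma card_pp_covers:
  assumes "pp_covers n u v"
  shows "card u = Suc (card v)"
proof -
  obtain S a T b where "(S, a) \<in> u" "(T, b) \<in> u" "S \<noteq> T" "v = pp_merge u S a T b"
    using pp_covers_merge[OF assms] .
  moreover have "u \<in> PP n" using assms unfolding pp_covers_def by blast
  ultimately show ?thesis using card_pp_merge by blast
qed

section \<open>The label and delta of a covering\<close>

context
  fixes n u S a T b
  assumes u: "u \<in> PP n" and S: "(S, a) \<in> u" and T: "(T, b) \<in> u" and ST: "S \<noteq> T"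
begin

lemma pp_label_merge:
  "pp_label n u (pp_merge u S a T b) = (max (Min S) (Min T), Min T + n - card u)"
  unfolding pp_label_def
proof (rule the_equality)
  show "\<exists>S' a' T' b' c. (S', a') \<in> u \<and> (T', b') \<in> u \<and> S' \<noteq> T' \<and> c \<in> {a', b'} \<and>
      pp_merge u S a T b = insert (S' \<union> T', c) (u - {(S', a'), (T', b')}) \<and>
      (max (Min S) (Min T), Min T + n - card u) =
        (max (Min S') (Min T'), (if c = a' then Min T' else Min S') + n - card u)"
    using S T ST unfolding pp_merge_def
    by (intro exI[of _ S] exI[of _ a] exI[of _ T] exI[of _ b] exI[of _ a]) simp
next
  fix l assume "\<exists>S' a' T' b' c. (S', a') \<in> u \<and> (T', b') \<in> u \<and> S' \<noteq> T' \<and> c \<in> {a', b'} \<and>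
      pp_merge u S a T b = insert (S' \<union> T', c) (u - {(S', a'), (T', b')}) \<and>
      l = (max (Min S') (Min T'), (if c = a' then Min T' else Min S') + n - card u)"
  then obtain S' a' T' b' c where S': "(S', a') \<in> u" and T': "(T', b') \<in> u" and "S' \<noteq> T'"
    and c: "c \<in> {a', b'}" and v: "pp_merge u S a T b = insert (S' \<union> T', c) (u - {(S', a'), (T', b')})"
    and l: "l = (max (Min S') (Min T'), (if c = a' then Min T' else Min S') + n - card u)"
    by blast
  show "l = (max (Min S) (Min T), Min T + n - card u)"
  proof (cases "c = a'")
    case True
    then have "pp_merge u S' a' T' b' = pp_merge u S a T b" using v unfolding pp_merge_def by simp
    then show ?thesis using pp_merge_inject[OF u S T ST S' T' \<open>S' \<noteq> T'\<close>] l True by simp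
  next
    case False
    then have "pp_merge u T' b' S' a' = pp_merge u S a T b"
      using v c unfolding pp_merge_def by (simp add: Un_commute insert_commute)
    then show ?thesis
      using pp_merge_inject[OF u S T ST T' S'] \<open>S' \<noteq> T'\<close> l False by (simp add: max.commute)
  qed
qed

lemma block_subset_merged_cases:
  assumes X: "(X, c) \<in> u" and sub: "X \<subseteq> S \<union> T"
  shows "X = S \<or> X = T"
proof -
  obtain x where "x \<in> X" using PP_block_nonempty[OF u X] by blast
  then show ?thesis using PP_block_eq[OF u X S] PP_block_eq[OF u X T] sub by blast
qed

lemma pp_merge_nontrivial_block_iff:
  "(U, d) \<in> pp_merge u S a T b \<and> (\<exists>(X, c)\<in>u. \<exists>(Y, e)\<in>u. X \<noteq> Y \<and> X \<subseteq> U \<and> Y \<subseteq> U)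
    \<longleftrightarrow> (U, d) = (S \<union> T, a)"
proof
  assume "(U, d) \<in> pp_merge u S a T b \<and> (\<exists>(X, c)\<in>u. \<exists>(Y, e)\<in>u. X \<noteq> Y \<and> X \<subseteq> U \<and> Y \<subseteq> U)"
  then obtain X c Y e where U: "(U, d) \<in> pp_merge u S a T b"
    and X: "(X, c) \<in> u" "X \<subseteq> U" and Y: "(Y, e) \<in> u" "Y \<subseteq> U" and "X \<noteq> Y"
    by auto
  show "(U, d) = (S \<union> T, a)"
  proof (rule ccontr)
    assume "(U, d) \<noteq> (S \<union> T, a)"
    then have Ud: "(U, d) \<in> u" using U unfolding pp_merge_def by blast
    have "X = U" if X: "(X, c) \<in> u" and sub: "X \<subseteq> U" for X c
    proof -
      obtain x where "x \<in> X" using PP_block_nonempty[OF u X] by blast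
      then show ?thesis using PP_block_eq[OF u X Ud] sub by blast
    qed
    then show False using X Y \<open>X \<noteq> Y\<close> by blast
  qed
next
  assume "(U, d) = (S \<union> T, a)"
  show "(U, d) \<in> pp_merge u S a T b \<and> (\<exists>(X, c)\<in>u. \<exists>(Y, e)\<in>u. X \<noteq> Y \<and> X \<subseteq> U \<and> Y \<subseteq> U)"
  proof
    show "(U, d) \<in> pp_merge u S a T b" using \<open>(U, d) = (S \<union> T, a)\<close> unfolding pp_merge_def by simp
    have "\<exists>(Y, e)\<in>u. S \<noteq> Y \<and> S \<subseteq> U \<and> Y \<subseteq> U"
      using T ST \<open>(U, d) = (S \<union> T, a)\<close> by auto
    then show "\<exists>(X, c)\<in>u. \<exists>(Y, e)\<in>u. X \<noteq> Y \<and> X \<subseteq> U \<and> Y \<subseteq> U"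
      using S by (intro bexI[of _ "(S, a)"]) simp_all
  qed
qed

lemma delta_merge: "delta u (pp_merge u S a T b) = {({Min S, Min T}, Min S)}"
proof -
  have mins: "{Min X | X c. (X, c) \<in> u \<and> X \<subseteq> S \<union> T} = {Min S, Min T}"
  proof (intro equalityI subsetI)
    fix m assume "m \<in> {Min X | X c. (X, c) \<in> u \<and> X \<subseteq> S \<union> T}"
    then obtain X c where "m = Min X" "(X, c) \<in> u" "X \<subseteq> S \<union> T" by blast
    then show "m \<in> {Min S, Min T}" using block_subset_merged_cases by blast
  next
    fix m assume "m \<in> {Min S, Min T}"
    then show "m \<in> {Min X | X c. (X, c) \<in> u \<and> X \<subseteq> S \<union> T}" using S T by blast
  qed
  have point: "(THE X. (X, a) \<in> u) = S"
  proof (rule the_equality)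
    fix X assume "(X, a) \<in> u"
    then show "X = S" by (rule PP_point_inj[OF u _ S])
  qed (rule S)
  have "delta u (pp_merge u S a T b) =
      {({Min X | X c. (X, c) \<in> u \<and> X \<subseteq> U}, Min (THE X. (X, d) \<in> u)) | U d. (U, d) = (S \<union> T, a)}"
    unfolding delta_def pp_merge_nontrivial_block_iff ..
  also have "\<dots> = {({Min X | X c. (X, c) \<in> u \<and> X \<subseteq> S \<union> T}, Min (THE X. (X, a) \<in> u))}"
    by simp
  finally show ?thesis unfolding mins point .
qed

lemma Min_in_Dset_pp_merge: "Min S \<in> Dset u (pp_merge u S a T b)" "Min T \<in> Dset u (pp_merge u S a T b)"
  unfolding Dset_def pp_merge_def using S T ST by blast+

lemma Min_merged_blocks_neq: "Min S \<noteq> Min T"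
  using Min_in[OF PP_block_finite[OF u S] PP_block_nonempty[OF u S]]
    Min_in[OF PP_block_finite[OF u T] PP_block_nonempty[OF u T]] merged_blocks_disjoint[OF u S T ST]
  by auto

end

lemma pp_covers_delta_label:
  assumes "pp_covers n u v"
  obtains m1 m2 where "m1 \<noteq> m2" "m1 \<in> Dset u v" "m2 \<in> Dset u v" "delta u v = {({m1, m2}, m1)}"
    "pp_label n u v = (max m1 m2, m2 + (n - card u))"
proof -
  have u: "u \<in> PP n" using assms unfolding pp_covers_def by blast
  obtain S a T b where S: "(S, a) \<in> u" and T: "(T, b) \<in> u" and "S \<noteq> T" and v: "v = pp_merge u S a T b"
    using pp_covers_merge[OF assms] .
  have "Min T + n - card u = Min T + (n - card u)" using card_PP_le[OF u] by simp
  then show thesis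
    using that[of "Min S" "Min T"] pp_label_merge[OF u S T \<open>S \<noteq> T\<close>] delta_merge[OF u S T \<open>S \<noteq> T\<close>]
      Min_in_Dset_pp_merge[OF u S T \<open>S \<noteq> T\<close>] Min_merged_blocks_neq[OF u S T \<open>S \<noteq> T\<close>]
    unfolding v by simp
qed

section \<open>Saturated chains under isomorphisms of intervals\<close>

lemma pp_interval_iso_covers:
  assumes bij: "bij_betw g (pp_interval n1 x1 y1) (pp_interval n2 x2 y2)"
    and ord: "\<forall>u\<in>pp_interval n1 x1 y1. \<forall>v\<in>pp_interval n1 x1 y1. pp_le u v \<longleftrightarrow> pp_le (g u) (g v)"
    and u: "u \<in> pp_interval n1 x1 y1" and v: "v \<in> pp_interval n1 x1 y1"
    and "pp_covers n1 u v"
  shows "pp_covers n2 (g u) (g v)"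
proof -
  have le: "pp_le u v" and "u \<noteq> v"
    and between: "\<And>w. w \<in> PP n1 \<Longrightarrow> pp_le u w \<Longrightarrow> pp_le w v \<Longrightarrow> w = u \<or> w = v"
    using \<open>pp_covers n1 u v\<close> unfolding pp_covers_def by blast+
  have gu: "g u \<in> pp_interval n2 x2 y2" and gv: "g v \<in> pp_interval n2 x2 y2"
    using bij u v by (meson bij_betwE)+
  have "g u \<noteq> g v" using bij u v \<open>u \<noteq> v\<close> unfolding bij_betw_def inj_on_def by blast
  moreover have "pp_le (g u) (g v)" using ord u v le by blast
  moreover have "R = g u \<or> R = g v"
    if R: "R \<in> PP n2" "pp_le (g u) R" "pp_le R (g v)" for R
  proof -
    have "R \<in> pp_interval n2 x2 y2"
      using R gu gv pp_le_trans unfolding pp_interval_def by blast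
    then obtain w where w: "w \<in> pp_interval n1 x1 y1" "R = g w"
      using bij unfolding bij_betw_def by blast
    then have "pp_le u w" "pp_le w v" using ord u v R by blast+
    then show ?thesis using between w unfolding pp_interval_def by blast
  qed
  moreover have "g u \<in> PP n2" "g v \<in> PP n2" using gu gv unfolding pp_interval_def by blast+
  ultimately show ?thesis unfolding pp_covers_def by blast
qed

lemma pp_interval_subset_PP: "pp_interval n x y \<subseteq> PP n"
  unfolding pp_interval_def by blast

lemma length_chain_labels: "length (chain_labels n cs) = length cs - 1"
  by (simp add: chain_labels_def)

lemma nth_chain_labels: "Suc i < length cs \<Longrightarrow> chain_labels n cs ! i = pp_label n (cs ! i) (cs ! Suc i)"
  by (simp add: chain_labels_def less_diff_conv)

lemma sat_chain_nth_mem: "sat_chain n Pi cs \<Longrightarrow> i < length cs \<Longrightarrow> cs ! i \<in> Pi"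
  unfolding sat_chain_def by (meson nth_mem subsetD)

lemma sat_chain_covers: "sat_chain n Pi cs \<Longrightarrow> Suc i < length cs \<Longrightarrow> pp_covers n (cs ! i) (cs ! Suc i)"
  unfolding sat_chain_def by blast

lemma sat_chain_card:
  assumes chain: "sat_chain n Pi cs" and "i < length cs"
  shows "card (hd cs) = card (cs ! i) + i"
  using \<open>i < length cs\<close>
proof (induction i)
  case 0
  then show ?case by (simp add: hd_conv_nth)
next
  case (Suc i)
  then have "card (hd cs) = card (cs ! i) + i" by simp
  moreover have "card (cs ! i) = Suc (card (cs ! Suc i))"
    using card_pp_covers[OF sat_chain_covers[OF chain Suc.prems]] .
  ultimately show ?case by simp
qed

lemma sat_chain_corank:
  assumes chain: "sat_chain n Pi cs" and "Pi \<subseteq> PP n" and "i < length cs"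
  shows "n - card (cs ! i) = n - card (hd cs) + i"
proof -
  have "hd cs \<in> PP n" using chain \<open>Pi \<subseteq> PP n\<close> hd_in_set unfolding sat_chain_def by blast
  then show ?thesis using card_PP_le sat_chain_card[OF assms(1,3)] by fastforce
qed

lemma max_strict_mono_on:
  fixes f :: "'a::linorder \<Rightarrow> 'b::linorder"
  assumes "strict_mono_on E f" "a \<in> E" "b \<in> E"
  shows "max (f a) (f b) = f (max a b)"
  using strict_mono_on_less_eq[OF assms] by (simp add: max_def)

context
  fixes E and f :: "nat \<Rightarrow> nat" and a b a' b'
  assumes sm: "strict_mono_on E f" and E: "a \<in> E" "b \<in> E" "a' \<in> E" "b' \<in> E"
begin

(* j = i compares two chains at the same position, j = Suc i consecutive labels of one chain;
   in the latter case the second components compare as b \<le> b', which f preserves as well. *)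
lemma lab_less_strict_mono_on_iff:
  assumes "i \<le> j" "j \<le> Suc i"
  shows "lab_less (max (f a) (f b), f b + d + i) (max (f a') (f b'), f b' + d + j) \<longleftrightarrow>
    lab_less (max a b, b + c + i) (max a' b', b' + c + j)"
proof -
  have max_in: "max a b \<in> E" "max a' b' \<in> E" using E by (simp_all add: max_def)
  have "j = i \<or> j = Suc i" using assms by linarith
  then have "f b + d + i < f b' + d + j \<longleftrightarrow> b + c + i < b' + c + j"
    using strict_mono_on_less[OF sm E(2,4)] strict_mono_on_less_eq[OF sm E(2,4)] by auto
  then show ?thesis
    unfolding lab_less_def max_strict_mono_on[OF sm E(1,2)] max_strict_mono_on[OF sm E(3,4)]
    using strict_mono_on_less[OF sm max_in] inj_on_eq_iff[OF strict_mono_on_imp_inj_on[OF sm] max_in]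
    by simp
qed

lemma label_eq_strict_mono_on_iff:
  "(max (f a) (f b), f b + d + i) = (max (f a') (f b'), f b' + d + i) \<longleftrightarrow>
    (max a b, b + c + i) = (max a' b', b' + c + i)"
proof -
  have max_in: "max a b \<in> E" "max a' b' \<in> E" using E by (simp_all add: max_def)
  show ?thesis
    unfolding max_strict_mono_on[OF sm E(1,2)] max_strict_mono_on[OF sm E(3,4)]
    using inj_on_eq_iff[OF strict_mono_on_imp_inj_on[OF sm] max_in] inj_on_eq_iff[OF strict_mono_on_imp_inj_on[OF sm] E(2,4)]
    by simp
qed

end

lemma sorted_wrt_nth_transfer:
  assumes "transp R" "transp R'" "length ys = length xs"
    and "\<And>i. Suc i < length xs \<Longrightarrow> R' (ys ! i) (ys ! Suc i) \<longleftrightarrow> R (xs ! i) (xs ! Suc i)"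
  shows "sorted_wrt R' ys \<longleftrightarrow> sorted_wrt R xs"
  unfolding sorted_wrt_iff_nth_Suc_transp[OF assms(1)] sorted_wrt_iff_nth_Suc_transp[OF assms(2)]
  using assms(3,4) by auto

definition list_lex_le :: "('a \<Rightarrow> 'a \<Rightarrow> bool) \<Rightarrow> 'a list \<Rightarrow> 'a list \<Rightarrow> bool" where
  "list_lex_le R xs ys \<longleftrightarrow>
    xs = ys \<or> (\<exists>i<length xs. i < length ys \<and> take i xs = take i ys \<and> R (xs ! i) (ys ! i))"

lemma chain_lex_le_iff:
  "chain_lex_le n cs cs' \<longleftrightarrow> list_lex_le lab_less (chain_labels n cs) (chain_labels n cs')"
  unfolding chain_lex_le_def list_lex_le_def Let_def ..

lemma list_lex_le_nth_transfer:
  assumes len: "length ys = length xs" "length ys' = length xs'"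
    and nth: "\<And>i. i < length xs \<Longrightarrow> i < length xs' \<Longrightarrow>
      (ys ! i = ys' ! i \<longleftrightarrow> xs ! i = xs' ! i) \<and> (R' (ys ! i) (ys' ! i) \<longleftrightarrow> R (xs ! i) (xs' ! i))"
    and "list_lex_le R xs xs'"
  shows "list_lex_le R' ys ys'"
proof -
  have take_iff: "take i ys = take i ys' \<longleftrightarrow> take i xs = take i xs'"
    if "i \<le> length xs" "i \<le> length xs'" for i
    using that len nth by (simp add: list_eq_iff_nth_eq min_absorb1)
  have "xs = xs' \<Longrightarrow> ys = ys'"
    using take_iff[of "length xs"] len by simp
  then show ?thesis
    using \<open>list_lex_le R xs xs'\<close> take_iff nth len unfolding list_lex_le_def
    by (metis less_imp_le_nat)
qed

context
  fixes n1 n2 x1 y1 x2 y2 g and f :: "nat \<Rightarrow> nat"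
  assumes iso: "subposet_iso n1 (pp_interval n1 x1 y1) n2 (pp_interval n2 x2 y2) g f"
begin

lemma subposet_iso_D:
  shows subposet_iso_bij: "bij_betw g (pp_interval n1 x1 y1) (pp_interval n2 x2 y2)"
    and subposet_iso_order:
      "\<forall>u\<in>pp_interval n1 x1 y1. \<forall>v\<in>pp_interval n1 x1 y1. pp_le u v \<longleftrightarrow> pp_le (g u) (g v)"
    and subposet_iso_strict_mono: "strict_mono_on (Eset (pp_interval n1 x1 y1)) f"
    and subposet_iso_delta: "\<And>u v. u \<in> pp_interval n1 x1 y1 \<Longrightarrow> v \<in> pp_interval n1 x1 y1 \<Longrightarrow>
      pp_covers n1 u v \<Longrightarrow> delta (g u) (g v) = pp_image f (delta u v)"
  using iso unfolding subposet_iso_def by blast+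

lemmas subposet_iso_covers = pp_interval_iso_covers[OF subposet_iso_bij subposet_iso_order]

lemma subposet_iso_label_cover:
  assumes u: "u \<in> pp_interval n1 x1 y1" and v: "v \<in> pp_interval n1 x1 y1"
    and cov: "pp_covers n1 u v"
  obtains m1 m2 where "m1 \<in> Eset (pp_interval n1 x1 y1)" "m2 \<in> Eset (pp_interval n1 x1 y1)"
    "pp_label n1 u v = (max m1 m2, m2 + (n1 - card u))"
    "pp_label n2 (g u) (g v) = (max (f m1) (f m2), f m2 + (n2 - card (g u)))"
proof -
  obtain m1 m2 where "m1 \<noteq> m2" "m1 \<in> Dset u v" "m2 \<in> Dset u v"
    and delta: "delta u v = {({m1, m2}, m1)}"
    and label: "pp_label n1 u v = (max m1 m2, m2 + (n1 - card u))"
    using pp_covers_delta_label[OF cov] .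
  moreover have "pp_le u v" using cov unfolding pp_covers_def by blast
  ultimately have E: "m1 \<in> Eset (pp_interval n1 x1 y1)" "m2 \<in> Eset (pp_interval n1 x1 y1)"
    using u v unfolding Eset_def by blast+
  obtain k1 k2 where "k1 \<noteq> k2" "k1 \<in> Dset (g u) (g v)" "k2 \<in> Dset (g u) (g v)"
    and gdelta: "delta (g u) (g v) = {({k1, k2}, k1)}"
    and glabel: "pp_label n2 (g u) (g v) = (max k1 k2, k2 + (n2 - card (g u)))"
    using pp_covers_delta_label[OF subposet_iso_covers[OF u v cov]] .
  have "delta (g u) (g v) = pp_image f (delta u v)" by (rule subposet_iso_delta[OF u v cov])
  also have "\<dots> = {({f m1, f m2}, f m1)}"
    unfolding delta pp_image_def by simp
  finally have "({k1, k2}, k1) = ({f m1, f m2}, f m1)"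
    unfolding gdelta by (rule singleton_inject)
  then have "k1 = f m1" "k2 = f m2" using \<open>k1 \<noteq> k2\<close> by (auto simp: doubleton_eq_iff)
  then show thesis using that E label glabel by simp
qed

lemma subposet_iso_sat_chain:
  assumes chain: "sat_chain n1 (pp_interval n1 x1 y1) cs"
  shows "sat_chain n2 (pp_interval n2 x2 y2) (map g cs)"
proof -
  have "set cs \<subseteq> pp_interval n1 x1 y1" using chain unfolding sat_chain_def by blast
  then have "set (map g cs) \<subseteq> pp_interval n2 x2 y2"
    using bij_betw_imp_surj_on[OF subposet_iso_bij] by auto
  moreover have "pp_covers n2 (map g cs ! i) (map g cs ! Suc i)" if "Suc i < length cs" for i
    using subposet_iso_covers[OF sat_chain_nth_mem[OF chain] sat_chain_nth_mem[OF chain]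
      sat_chain_covers[OF chain that]] that by simp
  ultimately show ?thesis using chain unfolding sat_chain_def by simp
qed

lemma subposet_iso_chain_label:
  assumes chain: "sat_chain n1 (pp_interval n1 x1 y1) cs" and i: "Suc i < length cs"
  obtains m1 m2 where "m1 \<in> Eset (pp_interval n1 x1 y1)" "m2 \<in> Eset (pp_interval n1 x1 y1)"
    "chain_labels n1 cs ! i = (max m1 m2, m2 + (n1 - card (hd cs)) + i)"
    "chain_labels n2 (map g cs) ! i = (max (f m1) (f m2), f m2 + (n2 - card (g (hd cs))) + i)"
proof -
  obtain m1 m2 where E: "m1 \<in> Eset (pp_interval n1 x1 y1)" "m2 \<in> Eset (pp_interval n1 x1 y1)"
    and label: "pp_label n1 (cs ! i) (cs ! Suc i) = (max m1 m2, m2 + (n1 - card (cs ! i)))"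
    and glabel: "pp_label n2 (g (cs ! i)) (g (cs ! Suc i)) = (max (f m1) (f m2), f m2 + (n2 - card (g (cs ! i))))"
    using subposet_iso_label_cover[OF sat_chain_nth_mem[OF chain Suc_lessD[OF i]]
      sat_chain_nth_mem[OF chain i] sat_chain_covers[OF chain i]] .
  have "chain_labels n1 cs ! i = pp_label n1 (cs ! i) (cs ! Suc i)" by (rule nth_chain_labels[OF i])
  moreover have "chain_labels n2 (map g cs) ! i = pp_label n2 (g (cs ! i)) (g (cs ! Suc i))"
    using nth_chain_labels[of i "map g cs" n2] i by simp
  moreover have "n1 - card (cs ! i) = n1 - card (hd cs) + i"
    using sat_chain_corank[OF chain pp_interval_subset_PP] i by simp
  moreover have "n2 - card (g (cs ! i)) = n2 - card (g (hd cs)) + i"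
  proof -
    have "cs \<noteq> []" using i by auto
    then show ?thesis
      using sat_chain_corank[OF subposet_iso_sat_chain[OF chain] pp_interval_subset_PP, of i] i
      by (simp add: hd_map)
  qed
  ultimately show thesis
    using that[OF E] unfolding label glabel by (simp only: add.assoc)
qed

lemma subposet_iso_increasing_chain_iff:
  assumes chain: "sat_chain n1 (pp_interval n1 x1 y1) cs"
  shows "increasing_chain n2 (map g cs) \<longleftrightarrow> increasing_chain n1 cs"
  unfolding increasing_chain_def
proof (rule sorted_wrt_nth_transfer)
  show "transp lab_less" "transp lab_less" unfolding transp_def lab_less_def by auto
  show "length (chain_labels n2 (map g cs)) = length (chain_labels n1 cs)"
    by (simp add: length_chain_labels)
  fix i assume "Suc i < length (chain_labels n1 cs)"
  then have i: "Suc i < length cs" "Suc (Suc i) < length cs" by (simp_all add: length_chain_labels)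
  obtain a b where E: "a \<in> Eset (pp_interval n1 x1 y1)" "b \<in> Eset (pp_interval n1 x1 y1)"
    and L: "chain_labels n1 cs ! i = (max a b, b + (n1 - card (hd cs)) + i)"
    and G: "chain_labels n2 (map g cs) ! i = (max (f a) (f b), f b + (n2 - card (g (hd cs))) + i)"
    using subposet_iso_chain_label[OF chain i(1)] .
  obtain a' b' where E': "a' \<in> Eset (pp_interval n1 x1 y1)" "b' \<in> Eset (pp_interval n1 x1 y1)"
    and L': "chain_labels n1 cs ! Suc i = (max a' b', b' + (n1 - card (hd cs)) + Suc i)"
    and G': "chain_labels n2 (map g cs) ! Suc i = (max (f a') (f b'), f b' + (n2 - card (g (hd cs))) + Suc i)"
    using subposet_iso_chain_label[OF chain i(2)] .
  show "lab_less (chain_labels n2 (map g cs) ! i) (chain_labels n2 (map g cs) ! Suc i) \<longleftrightarrow>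
      lab_less (chain_labels n1 cs ! i) (chain_labels n1 cs ! Suc i)"
    unfolding L G L' G' by (rule lab_less_strict_mono_on_iff[OF subposet_iso_strict_mono E E']) simp_all
qed

(* The common bottom gives both chains the same rank at every position. *)
lemma subposet_iso_chain_lex_le:
  assumes chain: "sat_chain n1 (pp_interval n1 x1 y1) cs" and chain': "sat_chain n1 (pp_interval n1 x1 y1) cs'"
    and "hd cs = hd cs'" and "chain_lex_le n1 cs cs'"
  shows "chain_lex_le n2 (map g cs) (map g cs')"
  using \<open>chain_lex_le n1 cs cs'\<close> unfolding chain_lex_le_iff
proof (rule list_lex_le_nth_transfer[rotated 3])
  show "length (chain_labels n2 (map g cs)) = length (chain_labels n1 cs)"
    "length (chain_labels n2 (map g cs')) = length (chain_labels n1 cs')"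
    by (simp_all add: length_chain_labels)
  fix i assume "i < length (chain_labels n1 cs)" "i < length (chain_labels n1 cs')"
  then have i: "Suc i < length cs" "Suc i < length cs'" by (simp_all add: length_chain_labels)
  obtain a b where E: "a \<in> Eset (pp_interval n1 x1 y1)" "b \<in> Eset (pp_interval n1 x1 y1)"
    and L: "chain_labels n1 cs ! i = (max a b, b + (n1 - card (hd cs)) + i)"
    and G: "chain_labels n2 (map g cs) ! i = (max (f a) (f b), f b + (n2 - card (g (hd cs))) + i)"
    using subposet_iso_chain_label[OF chain i(1)] .
  obtain a' b' where E': "a' \<in> Eset (pp_interval n1 x1 y1)" "b' \<in> Eset (pp_interval n1 x1 y1)"
    and L': "chain_labels n1 cs' ! i = (max a' b', b' + (n1 - card (hd cs)) + i)"
    and G': "chain_labels n2 (map g cs') ! i = (max (f a') (f b'), f b' + (n2 - card (g (hd cs))) + i)"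
    using subposet_iso_chain_label[OF chain' i(2)] unfolding \<open>hd cs = hd cs'\<close> .
  show "(chain_labels n2 (map g cs) ! i = chain_labels n2 (map g cs') ! i \<longleftrightarrow>
      chain_labels n1 cs ! i = chain_labels n1 cs' ! i) \<and>
    (lab_less (chain_labels n2 (map g cs) ! i) (chain_labels n2 (map g cs') ! i) \<longleftrightarrow>
      lab_less (chain_labels n1 cs ! i) (chain_labels n1 cs' ! i))"
    unfolding L G L' G'
    by (intro conjI label_eq_strict_mono_on_iff[OF subposet_iso_strict_mono E E']
        lab_less_strict_mono_on_iff[OF subposet_iso_strict_mono E E']) simp_all
qed

end

theorem mainTheorem7:
  fixes n1 n2 :: nat
    and x1 y1 x2 y2 :: "(nat set \<times> nat) set"
    and g :: "(nat set \<times> nat) set \<Rightarrow> (nat set \<times> nat) set"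
    and f :: "nat \<Rightarrow> nat"
  assumes "x1 \<in> PP n1" "y1 \<in> PP n1" "pp_le x1 y1"
    and "x2 \<in> PP n2" "y2 \<in> PP n2" "pp_le x2 y2"
    and "subposet_iso n1 (pp_interval n1 x1 y1) n2 (pp_interval n2 x2 y2) g f"
  shows "(\<forall>cs. sat_chain n1 (pp_interval n1 x1 y1) cs \<longrightarrow>
            (increasing_chain n1 cs \<longrightarrow> increasing_chain n2 (map g cs)) \<and>
            (\<not> increasing_chain n1 cs \<longrightarrow> \<not> increasing_chain n2 (map g cs))) \<and>
         (\<forall>cs cs'. sat_chain n1 (pp_interval n1 x1 y1) cs \<and>
            sat_chain n1 (pp_interval n1 x1 y1) cs' \<and>
            hd cs = hd cs' \<and> last cs = last cs' \<longrightarrow>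
            chain_lex_le n1 cs cs' \<longrightarrow> chain_lex_le n2 (map g cs) (map g cs'))"
  using subposet_iso_increasing_chain_iff[OF assms(7)] subposet_iso_chain_lex_le[OF assms(7)] by blast

end
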